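(* Let $\mathbb{A}$ be an epistemic Heyting algebra, let $\mathbb{E}=(E,(\sim_i),(P_i),\Phi,\mathsf{pre})$ be a probabilistic event structure over $\mathbb{A}$, and let $\mathbb{A}'=\prod_{\mathbb{E}}\mathbb{A}$ be the intermediate algebra. For every agent $i\in\mathsf{Ag}$, $$\mathsf{Min}_i(\mathbb{A}')=\{f_{e,a}\mid e\in E\text{ and }a\in\mathsf{Min}_i(\mathbb{A})\},$$ where for $e\in E$ and $a\in\mathsf{Min}_i(\mathbb{A})$, $f_{e,a}:E\to\mathbb{A}$ is given by $f_{e,a}(e')=a$ if $e'\sim_i e$ and $f_{e,a}(e')=\bot$ otherwise.
   Context: Fix a set $\mathsf{Ag}$ of agents. A monadic Heyting algebra is a Heyting algebra $\mathbb{L}$ with, for each $i\in\mathsf{Ag}$, monotone unary operations $\lozenge_i,\Box_i$ such that for all $a,b$: $a\leq\lozenge_i a$; $\Box_i a\leq a$; $\lozenge_i(a\vee b)\leq\lozenge_i a\vee\lozenge_i b$; $\Box_i(a\to b)\leq\Box_i a\to\Box_i b$; $\lozenge_i a\leq\Box_i\lozenge_i a$; $\lozenge_i\Box_i a\leq\Box_i a$; $\Box_i(a\to b)\leq\lozenge_i a\to\lozenge_i b$; $\lozenge_i\bot\leq\bot$; $\top\leq\Box_i\top$. An epistemic Heyting algebra is a finite monadic Heyting algebra with $\lozenge_i a\vee\neg\lozenge_i a=\top$ for all $i,a$. An element $a$ is $i$-minimal if $a\neq\bot$, $\lozenge_i a=a$, and whenever $b<a$ and $\lozenge_i b=b$ then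 $b=\bot$; $\mathsf{Min}_i(\mathbb{A})$ is the set of $i$-minimal elements. A pre-ordered multiset on a set $X$ is a multiset of elements of $X$ in which the copies $x_1,\dots,x_n$ of any element carry the linear order $x_1\prec\cdots\prec x_n$. A probabilistic event structure over $\mathbb{A}$ is a tuple $(E,(\sim_i),(P_i),\Phi,\mathsf{pre})$ where: $E$ is a non-empty finite set; each $\sim_i$ is an equivalence relation on $E$; each $P_i:E\to\,]0,1]$ satisfies $\sum\{P_i(e')\mid e'\sim_i e\}=1$; $\Phi$ is a finite pre-ordered multiset on $\mathbb{A}$ such that any $a,b\in\Phi$ arising from distinct elements satisfy $a\wedge b=\bot$ or $a<b$ or $b<a$; $\mathsf{pre}(\bullet\mid a)$ is a probability distribution on $E$ for each $a\in\Phi$; and if $\mathsf{pre}(e\mid a)=0$ then $\mathsf{pre}(e\mid b)=0$ for all $b\in\Phi$ with $a<b$ (distinct elements) or $a\prec b$ (copies of the same element). The intermediate algebra $\mathbb{A}'=\prod_{\mathbb{E}}\mathbb{A}$ has as carrier all maps $f:E\to\mathbb{A}$ with pointwise Heyting operations, and $(\lozenge'_i f)(e)=\bigvee\{\lozenge_i f(e')\mid e'\sim_i e\}$, $(\Box'_i f)(e)=\bigwedge\{\Box_i f(e')\mid e'\sim_i e\}$; $i$-minimality in $\mathbb{A}'$ is with respect to $\lozenge'_i$. *)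

theory Defs
  imports Complex_Main "HOL-Library.Multiset"
begin

(* Heyting algebra: a (finite, hence complete) lattice with an implication
   characterised by residuation  inf x y \<le> z \<longleftrightarrow> x \<le> (y -> z). *)
definition heyting_imp :: "('a::complete_lattice \<Rightarrow> 'a \<Rightarrow> 'a) \<Rightarrow> bool" where
  "heyting_imp imp \<longleftrightarrow> (\<forall>x y z. inf x y \<le> z \<longleftrightarrow> x \<le> imp y z)"

definition monadic_heyting ::
  "('a::complete_lattice \<Rightarrow> 'a \<Rightarrow> 'a) \<Rightarrow> ('i \<Rightarrow> 'a \<Rightarrow> 'a) \<Rightarrow> ('i \<Rightarrow> 'a \<Rightarrow> 'a) \<Rightarrow> bool" where
  "monadic_heyting imp dia box \<longleftrightarrow> heyting_imp imp \<and>
     (\<forall>i. mono (dia i) \<and> mono (box i) \<and>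
       (\<forall>a b. a \<le> dia i a \<and> box i a \<le> a \<and>
              dia i (sup a b) \<le> sup (dia i a) (dia i b) \<and>
              box i (imp a b) \<le> imp (box i a) (box i b) \<and>
              dia i a \<le> box i (dia i a) \<and>
              dia i (box i a) \<le> box i a \<and>
              box i (imp a b) \<le> imp (dia i a) (dia i b)) \<and>
       dia i bot \<le> bot \<and> top \<le> box i top)"

definition epistemic_heyting ::
  "('a::{finite,complete_lattice} \<Rightarrow> 'a \<Rightarrow> 'a) \<Rightarrow> ('i \<Rightarrow> 'a \<Rightarrow> 'a) \<Rightarrow> ('i \<Rightarrow> 'a \<Rightarrow> 'a) \<Rightarrow> bool" where
  "epistemic_heyting imp dia box \<longleftrightarrow> monadic_heyting imp dia box \<and>
     (\<forall>i a. sup (dia i a) (imp (dia i a) bot) = top)"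

definition Min_i :: "('i \<Rightarrow> 'a::complete_lattice \<Rightarrow> 'a) \<Rightarrow> 'i \<Rightarrow> 'a set" where
  "Min_i dia i = {a. a \<noteq> bot \<and> dia i a = a \<and> (\<forall>b. b < a \<and> dia i b = b \<longrightarrow> b = bot)}"

(* The pre-ordered multiset \<Phi> is an 'a multiset;
   the copies of an element a are (a,0) \<prec> (a,1) \<prec> ... \<prec> (a, count \<Phi> a - 1),
   and pre (a,k) is the distribution attached to the k-th copy of a. *)
definition prob_event_structure ::
  "'e set \<Rightarrow> ('i \<Rightarrow> ('e \<times> 'e) set) \<Rightarrow> ('i \<Rightarrow> 'e \<Rightarrow> real) \<Rightarrow> 'a::complete_lattice multiset
   \<Rightarrow> ('a \<times> nat \<Rightarrow> 'e \<Rightarrow> real) \<Rightarrow> bool" where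
  "prob_event_structure E sim P \<Phi> pre \<longleftrightarrow>
     E \<noteq> {} \<and> finite E \<and>
     (\<forall>i. equiv E (sim i)) \<and>
     (\<forall>i. \<forall>e\<in>E. 0 < P i e \<and> P i e \<le> 1 \<and> (\<Sum>e'\<in>{e'\<in>E. (e', e) \<in> sim i}. P i e') = 1) \<and>
     (\<forall>a\<in>set_mset \<Phi>. \<forall>b\<in>set_mset \<Phi>. a \<noteq> b \<longrightarrow> inf a b = bot \<or> a < b \<or> b < a) \<and>
     (\<forall>a k. k < count \<Phi> a \<longrightarrow> (\<forall>e\<in>E. 0 \<le> pre (a, k) e) \<and> (\<Sum>e\<in>E. pre (a, k) e) = 1) \<and>
     (\<forall>a k b l. k < count \<Phi> a \<and> l < count \<Phi> b \<and> ((a \<noteq> b \<and> a < b) \<or> (a = b \<and> k < l)) \<longrightarrow>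
        (\<forall>e\<in>E. pre (a, k) e = 0 \<longrightarrow> pre (b, l) e = 0))"

(* Intermediate algebra: maps E -> A, represented as functions 'e \<Rightarrow> 'a that are bot outside E;
   Heyting operations and order are pointwise. *)
definition int_carrier :: "'e set \<Rightarrow> ('e \<Rightarrow> 'a::complete_lattice) set" where
  "int_carrier E = {f. \<forall>e. e \<notin> E \<longrightarrow> f e = bot}"

definition dia' :: "'e set \<Rightarrow> ('i \<Rightarrow> ('e \<times> 'e) set) \<Rightarrow> ('i \<Rightarrow> 'a::complete_lattice \<Rightarrow> 'a)
   \<Rightarrow> 'i \<Rightarrow> ('e \<Rightarrow> 'a) \<Rightarrow> ('e \<Rightarrow> 'a)" where
  "dia' E sim dia i f = (\<lambda>e. if e \<in> E then Sup {dia i (f e') | e'. (e', e) \<in> sim i} else bot)"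

definition box' :: "'e set \<Rightarrow> ('i \<Rightarrow> ('e \<times> 'e) set) \<Rightarrow> ('i \<Rightarrow> 'a::complete_lattice \<Rightarrow> 'a)
   \<Rightarrow> 'i \<Rightarrow> ('e \<Rightarrow> 'a) \<Rightarrow> ('e \<Rightarrow> 'a)" where
  "box' E sim box i f = (\<lambda>e. if e \<in> E then Inf {box i (f e') | e'. (e', e) \<in> sim i} else bot)"

definition Min_i' :: "'e set \<Rightarrow> ('i \<Rightarrow> ('e \<times> 'e) set) \<Rightarrow> ('i \<Rightarrow> 'a::complete_lattice \<Rightarrow> 'a)
   \<Rightarrow> 'i \<Rightarrow> ('e \<Rightarrow> 'a) set" where
  "Min_i' E sim dia i = {f \<in> int_carrier E. f \<noteq> (\<lambda>_. bot) \<and> dia' E sim dia i f = f \<and>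
      (\<forall>g \<in> int_carrier E. g < f \<and> dia' E sim dia i g = g \<longrightarrow> g = (\<lambda>_. bot))}"

definition f_ea :: "('i \<Rightarrow> ('e \<times> 'e) set) \<Rightarrow> 'i \<Rightarrow> 'e \<Rightarrow> 'a::complete_lattice \<Rightarrow> ('e \<Rightarrow> 'a)" where
  "f_ea sim i e a = (\<lambda>e'. if (e', e) \<in> sim i then a else bot)"

end

theory Submission
  imports Defs
begin

text \<open>Only three properties of the algebra matter: \<open>\<lozenge>\<^sub>i\<close> is extensive, \<open>\<lozenge>\<^sub>i \<bottom> = \<bottom>\<close>,
  and \<open>\<sim>\<^sub>i\<close> is an equivalence on \<open>E\<close>. A map is then \<open>\<lozenge>'\<^sub>i\<close>-fixed iff it is constant on
  \<open>\<sim>\<^sub>i\<close>-classes with \<open>\<lozenge>\<^sub>i\<close>-fixed values, so every nonzero fixed map lies above some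
  \<open>f\<^sub>e\<^sub>,\<^sub>a\<close>, and any fixed map below \<open>f\<^sub>e\<^sub>,\<^sub>a\<close> is of the form \<open>f\<^sub>e\<^sub>,\<^sub>c\<close> where \<open>c \<le> a\<close>
  is \<open>\<lozenge>\<^sub>i\<close>-fixed. Minimality thus transfers in both directions between \<open>a\<close> and \<open>f\<^sub>e\<^sub>,\<^sub>a\<close>.\<close>

context
  fixes E :: "'e set" and sim :: "'i \<Rightarrow> ('e \<times> 'e) set"
    and dia :: "'i \<Rightarrow> 'a::complete_lattice \<Rightarrow> 'a" and i :: 'i
  assumes equiv_sim: "equiv E (sim i)"
    and dia_extensive: "\<And>a. a \<le> dia i a"
    and dia_bot: "dia i bot = bot"
begin

lemma sim_refl: "e \<in> E \<Longrightarrow> (e, e) \<in> sim i"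
  using equiv_sim by (auto simp: equiv_def dest: refl_onD)

lemma sim_in_E: "(e, e') \<in> sim i \<Longrightarrow> e \<in> E \<and> e' \<in> E"
  using equiv_type[OF equiv_sim] by blast

lemma sim_class_iff:
  assumes "(e1, e0) \<in> sim i"
  shows "(x, e1) \<in> sim i \<longleftrightarrow> (x, e0) \<in> sim i" and "(e1, x) \<in> sim i \<longleftrightarrow> (e0, x) \<in> sim i"
  using equiv_sim assms by (meson equivE symD transD)+

lemma dia'_eq_on_class:
  "(e1, e0) \<in> sim i \<Longrightarrow> dia' E sim dia i g e1 = dia' E sim dia i g e0"
  using sim_class_iff(1)[of e1 e0] sim_in_E[of e1 e0] by (simp add: dia'_def)

lemma dia_le_dia': "e \<in> E \<Longrightarrow> dia i (g e) \<le> dia' E sim dia i g e"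
  unfolding dia'_def using sim_refl[of e] by (simp add: Sup_upper setcompr_eq_image)

lemma dia'_outside_E: "e \<notin> E \<Longrightarrow> dia' E sim dia i g e = bot"
  by (simp add: dia'_def)

lemma dia'_fixed_iff:
  "dia' E sim dia i g = g \<longleftrightarrow>
     g \<in> int_carrier E \<and> (\<forall>e\<in>E. dia i (g e) = g e) \<and> (\<forall>(e1, e0)\<in>sim i. g e1 = g e0)"
  (is "?fixed \<longleftrightarrow> ?carrier \<and> ?pointwise \<and> ?constant")
proof
  assume fixed: ?fixed
  have ?carrier
    unfolding int_carrier_def using dia'_outside_E[of _ g] by (simp add: fixed)
  moreover have ?pointwise
    using dia_le_dia'[of _ g] dia_extensive by (simp add: fixed antisym)
  moreover have ?constant
    using dia'_eq_on_class[of _ _ g] by (auto simp: fixed)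
  ultimately show "?carrier \<and> ?pointwise \<and> ?constant" by blast
next
  assume "?carrier \<and> ?pointwise \<and> ?constant"
  then have carrier: ?carrier and pointwise: ?pointwise and class_constant: ?constant by auto
  have "dia' E sim dia i g e0 = g e0" for e0
  proof (cases "e0 \<in> E")
    case True
    have "dia i (g e') = g e0" if "(e', e0) \<in> sim i" for e'
      using that class_constant pointwise sim_in_E by fastforce
    then have "{dia i (g e') | e'. (e', e0) \<in> sim i} = {g e0}"
      using sim_refl[OF True] by (auto intro!: exI[of _ e0])
    with True show ?thesis by (simp add: dia'_def)
  next
    case False
    with carrier show ?thesis by (simp add: dia'_outside_E int_carrier_def)
  qed
  then show ?fixed by blast
qed

lemma f_ea_in_int_carrier: "f_ea sim i e a \<in> int_carrier E"
  using sim_in_E by (auto simp: int_carrier_def f_ea_def)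

lemma dia'_fixed_f_ea:
  assumes "dia i a = a"
  shows "dia' E sim dia i (f_ea sim i e a) = f_ea sim i e a"
  unfolding dia'_fixed_iff
  using f_ea_in_int_carrier assms dia_bot sim_class_iff(2) by (auto simp: f_ea_def)

lemma f_ea_le_iff: "e \<in> E \<Longrightarrow> f_ea sim i e b \<le> f_ea sim i e a \<longleftrightarrow> b \<le> a"
  using sim_refl[of e] by (auto simp: le_fun_def f_ea_def)

lemma f_ea_less_iff: "e \<in> E \<Longrightarrow> f_ea sim i e b < f_ea sim i e a \<longleftrightarrow> b < a"
  by (simp add: less_le_not_le f_ea_le_iff)

lemma f_ea_eq_bot_iff: "e \<in> E \<Longrightarrow> f_ea sim i e a = (\<lambda>_. bot) \<longleftrightarrow> a = bot"
  using sim_refl[of e] by (auto simp: f_ea_def fun_eq_iff)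

lemma f_ea_le_dia'_fixed:
  "dia' E sim dia i g = g \<Longrightarrow> f_ea sim i e (g e) \<le> g"
  unfolding dia'_fixed_iff by (auto simp: le_fun_def f_ea_def)

lemma dia'_fixed_below_f_ea:
  assumes "dia' E sim dia i g = g" and "g \<le> f_ea sim i e a"
  shows "g = f_ea sim i e (g e)"
proof (rule antisym[OF _ f_ea_le_dia'_fixed[OF assms(1)]])
  show "g \<le> f_ea sim i e (g e)"
  proof (rule le_funI)
    fix x
    show "g x \<le> f_ea sim i e (g e) x"
    proof (cases "(x, e) \<in> sim i")
      case True
      then show ?thesis using assms(1) unfolding dia'_fixed_iff by (auto simp: f_ea_def)
    next
      case False
      then show ?thesis using le_funD[OF assms(2), of x] by (simp add: f_ea_def)
    qed
  qed
qed

lemma Min_i'_imp_f_ea: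
  assumes f: "f \<in> Min_i' E sim dia i"
  obtains e a where "e \<in> E" "a \<in> Min_i dia i" "f = f_ea sim i e a"
proof -
  have fixed: "dia' E sim dia i f = f" and nonzero: "f \<noteq> (\<lambda>_. bot)"
    and minimal: "\<And>g. g \<in> int_carrier E \<Longrightarrow> g < f \<Longrightarrow> dia' E sim dia i g = g \<Longrightarrow> g = (\<lambda>_. bot)"
    using f by (auto simp: Min_i'_def)
  obtain e where fe: "f e \<noteq> bot" using nonzero by auto
  have e: "e \<in> E" and fe_fixed: "dia i (f e) = f e"
    using fixed fe unfolding dia'_fixed_iff int_carrier_def by auto
  have f_eq: "f = f_ea sim i e (f e)"
    using minimal[OF f_ea_in_int_carrier _ dia'_fixed_f_ea[OF fe_fixed]]
      f_ea_le_dia'_fixed[OF fixed] f_ea_eq_bot_iff[OF e] fe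
    by (metis order.not_eq_order_implies_strict)
  have "f e \<in> Min_i dia i"
    unfolding Min_i_def
  proof (intro CollectI conjI allI impI)
    fix c assume c: "c < f e \<and> dia i c = c"
    then have "f_ea sim i e c < f"
      by (subst f_eq) (simp add: f_ea_less_iff[OF e])
    with c show "c = bot"
      using minimal[OF f_ea_in_int_carrier _ dia'_fixed_f_ea] f_ea_eq_bot_iff[OF e] by blast
  qed (use fe fe_fixed in auto)
  then show thesis by (rule that[OF e _ f_eq])
qed

lemma f_ea_in_Min_i':
  assumes e: "e \<in> E" and a: "a \<in> Min_i dia i"
  shows "f_ea sim i e a \<in> Min_i' E sim dia i"
proof -
  have a_fixed: "dia i a = a" and a_nonzero: "a \<noteq> bot"
    and a_minimal: "\<And>c. c < a \<Longrightarrow> dia i c = c \<Longrightarrow> c = bot"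
    using a by (auto simp: Min_i_def)
  have "g = (\<lambda>_. bot)"
    if g_less: "g < f_ea sim i e a" and g_fixed: "dia' E sim dia i g = g" for g
  proof -
    have g_eq: "g = f_ea sim i e (g e)"
      using dia'_fixed_below_f_ea[OF g_fixed less_imp_le[OF g_less]] .
    with g_less have "g e < a"
      by (metis f_ea_less_iff[OF e])
    moreover have "dia i (g e) = g e"
      using g_fixed e unfolding dia'_fixed_iff by blast
    ultimately have "g e = bot" by (rule a_minimal)
    with g_eq show ?thesis by (simp add: f_ea_def)
  qed
  moreover have "f_ea sim i e a \<noteq> (\<lambda>_. bot)"
    using f_ea_eq_bot_iff[OF e] a_nonzero by blast
  ultimately show ?thesis
    unfolding Min_i'_def using f_ea_in_int_carrier dia'_fixed_f_ea[OF a_fixed] by blast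
qed

end

theorem proposition4:
  fixes imp :: "'a::{finite,complete_lattice} \<Rightarrow> 'a \<Rightarrow> 'a"
    and dia box :: "'i \<Rightarrow> 'a \<Rightarrow> 'a"
    and E :: "'e set" and sim :: "'i \<Rightarrow> ('e \<times> 'e) set" and P :: "'i \<Rightarrow> 'e \<Rightarrow> real"
    and \<Phi> :: "'a multiset" and pre :: "'a \<times> nat \<Rightarrow> 'e \<Rightarrow> real"
  assumes "epistemic_heyting imp dia box"
    and "prob_event_structure E sim P \<Phi> pre"
  shows "Min_i' E sim dia i = {f_ea sim i e a | e a. e \<in> E \<and> a \<in> Min_i dia i}"
proof -
  have "monadic_heyting imp dia box"
    using assms(1) by (simp add: epistemic_heyting_def)
  then have extensive: "\<And>a. a \<le> dia i a" and dia_bot: "dia i bot = bot"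
    by (auto simp: monadic_heyting_def bot_unique)
  have equiv: "equiv E (sim i)"
    using assms(2) by (simp add: prob_event_structure_def)
  note Min_i'_imp_f_ea[where E = E and sim = sim and dia = dia and i = i, OF equiv extensive dia_bot]
    and f_ea_in_Min_i'[where E = E and sim = sim and dia = dia and i = i, OF equiv extensive dia_bot]
  then show ?thesis by blast
qed

end
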